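(* Let $K$ be a field, $\vartheta$ any one of the four types (left, right, pre-two-sided, two-sided), and $\mathcal A$ a $K$-algebra. Then $\mathcal A$ is $\vartheta$-quasi-stable if and only if either $\mathcal A\simeq K\times K$ (product algebra with componentwise operations) or $\mathcal A$ is a local $K$-algebra which is algebraic over $K$.
   Context: Algebras are associative, unital and nonzero. A local algebra is one with a unique maximal left ideal. $\mathcal A$ is algebraic over $K$ if every element is a root of a nonzero polynomial over $K$. A $K$-subspace $V$ of $\mathcal A$ is a left (resp. right) Mathieu subspace if whenever $a^m\in V$ for all $m\ge1$, then for every $b\in\mathcal A$, $ba^m\in V$ (resp. $a^mb\in V$) for all sufficiently large $m$; pre-two-sided if both left and right; two-sided if whenever $a^m\in V$ for all $m\ge1$, for all $b,c\in\mathcal A$, $ba^mc\in V$ for all sufficiently large $m$. $\mathcal A$ is $\vartheta$-quasi-stable if every $K$-subspace $V$ with $1\notin V$ is a $\vartheta$-Mathieu subspace of $\mathcal A$. *)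

theory Defs
  imports "HOL-Computational_Algebra.Polynomial"
begin

text \<open>A (unital, associative, nonzero) K-algebra is modelled by a type 'b of class ring_1
  (which includes 0 \<noteq> 1) together with a ring homomorphism ofK from the field K into
  the centre of 'b; scalar multiplication c \<cdot> x is ofK c * x.\<close>

definition K_algebra :: "('a::field \<Rightarrow> 'b::ring_1) \<Rightarrow> bool" where
  "K_algebra ofK \<longleftrightarrow>
     (\<forall>c d. ofK (c + d) = ofK c + ofK d) \<and>
     (\<forall>c d. ofK (c * d) = ofK c * ofK d) \<and>
     ofK 1 = 1 \<and>
     (\<forall>c x. ofK c * x = x * ofK c)"

definition K_subspace :: "('a::field \<Rightarrow> 'b::ring_1) \<Rightarrow> 'b set \<Rightarrow> bool" where
  "K_subspace ofK V \<longleftrightarrow>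
     0 \<in> V \<and> (\<forall>x\<in>V. \<forall>y\<in>V. x + y \<in> V) \<and> (\<forall>c. \<forall>x\<in>V. ofK c * x \<in> V)"

datatype mtype = LeftM | RightM | PreTwoSidedM | TwoSidedM

definition mathieu_subspace :: "mtype \<Rightarrow> ('a::field \<Rightarrow> 'b::ring_1) \<Rightarrow> 'b set \<Rightarrow> bool" where
  "mathieu_subspace \<theta> ofK V \<longleftrightarrow> K_subspace ofK V \<and>
     (case \<theta> of
        LeftM \<Rightarrow> (\<forall>a. (\<forall>m\<ge>1. a ^ m \<in> V) \<longrightarrow>
                    (\<forall>b. \<exists>N. \<forall>m\<ge>N. b * a ^ m \<in> V))
      | RightM \<Rightarrow> (\<forall>a. (\<forall>m\<ge>1. a ^ m \<in> V) \<longrightarrow>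
                    (\<forall>b. \<exists>N. \<forall>m\<ge>N. a ^ m * b \<in> V))
      | PreTwoSidedM \<Rightarrow> (\<forall>a. (\<forall>m\<ge>1. a ^ m \<in> V) \<longrightarrow>
                    (\<forall>b. \<exists>N. \<forall>m\<ge>N. b * a ^ m \<in> V) \<and>
                    (\<forall>b. \<exists>N. \<forall>m\<ge>N. a ^ m * b \<in> V))
      | TwoSidedM \<Rightarrow> (\<forall>a. (\<forall>m\<ge>1. a ^ m \<in> V) \<longrightarrow>
                    (\<forall>b c. \<exists>N. \<forall>m\<ge>N. b * a ^ m * c \<in> V)))"

definition quasi_stable :: "mtype \<Rightarrow> ('a::field \<Rightarrow> 'b::ring_1) \<Rightarrow> bool" where
  "quasi_stable \<theta> ofK \<longleftrightarrow>
     (\<forall>V. K_subspace ofK V \<and> 1 \<notin> V \<longrightarrow> mathieu_subspace \<theta> ofK V)"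

definition left_ideal :: "'b::ring_1 set \<Rightarrow> bool" where
  "left_ideal I \<longleftrightarrow> 0 \<in> I \<and> (\<forall>x\<in>I. \<forall>y\<in>I. x + y \<in> I) \<and> (\<forall>b. \<forall>x\<in>I. b * x \<in> I)"

definition maximal_left_ideal :: "'b::ring_1 set \<Rightarrow> bool" where
  "maximal_left_ideal M \<longleftrightarrow> left_ideal M \<and> M \<noteq> UNIV \<and>
     (\<forall>J. left_ideal J \<and> M \<subseteq> J \<and> J \<noteq> UNIV \<longrightarrow> J = M)"

definition local_ring :: "'b::ring_1 itself \<Rightarrow> bool" where
  "local_ring _ \<longleftrightarrow> (\<exists>!M::'b set. maximal_left_ideal M)"

definition peval :: "('a::field \<Rightarrow> 'b::ring_1) \<Rightarrow> 'a poly \<Rightarrow> 'b \<Rightarrow> 'b" where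
  "peval ofK p x = (\<Sum>i\<le>degree p. ofK (coeff p i) * x ^ i)"

definition algebraic_over :: "('a::field \<Rightarrow> 'b::ring_1) \<Rightarrow> bool" where
  "algebraic_over ofK \<longleftrightarrow> (\<forall>x. \<exists>p. p \<noteq> 0 \<and> peval ofK p x = 0)"

definition iso_KxK :: "('a::field \<Rightarrow> 'b::ring_1) \<Rightarrow> bool" where
  "iso_KxK ofK \<longleftrightarrow> (\<exists>f :: 'b \<Rightarrow> 'a \<times> 'a. bij f \<and>
     (\<forall>x y. f (x + y) = (fst (f x) + fst (f y), snd (f x) + snd (f y))) \<and>
     (\<forall>x y. f (x * y) = (fst (f x) * fst (f y), snd (f x) * snd (f y))) \<and>
     (\<forall>c x. f (ofK c * x) = (c * fst (f x), c * snd (f x))) \<and>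
     f 1 = (1, 1))"

end

theory Submission
  imports Defs
begin

text \<open>Quasi-stability of either side means: whenever a subspace \<open>V \<not>\<ni> 1\<close> contains all
  positive powers of \<open>a\<close>, it also contains some \<open>b a\<^sup>m\<close> (resp. \<open>a\<^sup>m b\<close>). For a
  transcendental \<open>x\<close>, the span of \<open>x\<^sup>2, x\<^sup>4, \<dots>\<close> violates this with \<open>b = x\<close>, so the
  algebra is algebraic. For a nontrivial idempotent \<open>e\<close>, the lines \<open>K e\<close> and \<open>K (1 - e)\<close>
  force \<open>x e \<in> K e\<close> and \<open>x (1 - e) \<in> K (1 - e)\<close>, so the algebra is \<open>K e \<oplus> K (1 - e) \<cong> K \<times> K\<close>.
  Without nontrivial idempotents, an annihilating polynomial of \<open>x\<close> shows that \<open>x\<close> is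
  nilpotent or that \<open>1\<close> is a polynomial in \<open>x\<close> without constant term, so \<open>x\<close> is nilpotent
  or a unit and the algebra is local. Conversely, in a local algebraic algebra the same
  dichotomy shows that \<open>a\<close> is nilpotent as soon as all its powers lie in \<open>V \<not>\<ni> 1\<close>; in
  \<open>K \<times> K\<close> an element with two nonzero coordinates has \<open>1\<close> in the span of \<open>a, a\<^sup>2\<close>, while
  otherwise \<open>b a\<^sup>m c \<in> K a\<^sup>m\<close>. Either way \<open>V\<close> is a two-sided Mathieu subspace.\<close>

section \<open>Units and nilpotent elements\<close>

definition invertible :: "'b::ring_1 \<Rightarrow> bool" where
  "invertible x \<longleftrightarrow> (\<exists>z. z * x = 1 \<and> x * z = 1)"

definition nilpotent :: "'b::ring_1 \<Rightarrow> bool" where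
  "nilpotent x \<longleftrightarrow> (\<exists>k. x ^ k = 0)"

lemma one_minus_mult_geometric_sum: "(1 - y) * (\<Sum>i<k. y ^ i) = 1 - (y::'b::ring_1) ^ k"
proof (induction k)
  case (Suc k)
  have "(1 - y) * (\<Sum>i<Suc k. y ^ i) = (1 - y) * (\<Sum>i<k. y ^ i) + (1 - y) * y ^ k"
    by (simp add: distrib_left)
  also have "\<dots> = (1 - y ^ k) + (y ^ k - y * y ^ k)"
    using Suc.IH by (simp add: left_diff_distrib)
  finally show ?case by simp
qed simp

lemma geometric_sum_mult_one_minus: "(\<Sum>i<k. y ^ i) * (1 - y) = 1 - (y::'b::ring_1) ^ k"
proof (induction k)
  case (Suc k)
  have "(\<Sum>i<Suc k. y ^ i) * (1 - y) = (\<Sum>i<k. y ^ i) * (1 - y) + y ^ k * (1 - y)"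
    by (simp add: distrib_right)
  also have "\<dots> = (1 - y ^ k) + (y ^ k - y ^ k * y)"
    using Suc.IH by (simp add: right_diff_distrib)
  finally show ?case by (simp add: power_commutes)
qed simp

lemma invertible_one_minus_nilpotent:
  assumes "nilpotent (x::'b::ring_1)"
  shows "invertible (1 - x)"
proof -
  obtain k where "x ^ k = 0" using assms unfolding nilpotent_def by blast
  then show ?thesis
    unfolding invertible_def
    using one_minus_mult_geometric_sum[of x k] geometric_sum_mult_one_minus[where y = x and k = k]
    by (intro exI[of _ "\<Sum>i<k. x ^ i"]) simp
qed

lemma power_left_inverse: "(z::'b::ring_1) * x = 1 \<Longrightarrow> z ^ n * x ^ n = 1"
proof (induction n)
  case (Suc n)
  have "z ^ Suc n * x ^ Suc n = z ^ n * (z * x) * x ^ n"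
    by (simp only: power_Suc2[of z] power_Suc[of x] mult.assoc)
  then show ?case using Suc by simp
qed simp

lemma nilpotent_not_left_invertible:
  assumes "nilpotent (x::'b::ring_1)"
  shows "z * x \<noteq> 1"
proof
  assume "z * x = 1"
  obtain k where "x ^ k = 0" using assms unfolding nilpotent_def by blast
  with power_left_inverse[OF \<open>z * x = 1\<close>, of k] show False by simp
qed

lemma idempotent_power:
  assumes "(e::'b::ring_1) * e = e" "m \<ge> 1"
  shows "e ^ m = e"
  using assms(2) by (induction m rule: dec_induct) (simp_all add: power_Suc2 assms(1))

section \<open>Local rings\<close>

lemma left_ideal_nonunits:
  assumes nil_or_unit: "\<And>x::'b::ring_1. nilpotent x \<or> invertible x"
  shows "left_ideal {x::'b. \<not> invertible x}"
proof -
  have mult: "\<not> invertible (b * x)" if "\<not> invertible x" for b x :: 'b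
  proof
    assume "invertible (b * x)"
    then obtain z where "(z * b) * x = 1" unfolding invertible_def by (auto simp: mult.assoc)
    with nil_or_unit that show False using nilpotent_not_left_invertible by blast
  qed
  have add: "\<not> invertible (x + y)" if "\<not> invertible x" "\<not> invertible y" for x y :: 'b
  proof
    assume "invertible (x + y)"
    then obtain u where u: "u * (x + y) = 1" unfolding invertible_def by blast
    have "invertible (1 - u * x)"
      using mult[OF that(1)] nil_or_unit invertible_one_minus_nilpotent by blast
    moreover have "1 - u * x = u * y" using u by (simp add: algebra_simps)
    ultimately show False using mult[OF that(2)] by simp
  qed
  have "\<not> invertible (0::'b)" by (simp add: invertible_def)
  with mult add show ?thesis unfolding left_ideal_def by blast
qed

lemma proper_left_ideal_not_left_invertible:
  assumes J: "left_ideal J" "J \<noteq> UNIV" and "x \<in> J"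
  shows "z * x \<noteq> 1"
proof
  assume zx: "z * x = 1"
  have "b \<in> J" for b
  proof -
    have "(b * z) * x \<in> J" using J(1) \<open>x \<in> J\<close> unfolding left_ideal_def by blast
    then show ?thesis using zx by (simp add: mult.assoc)
  qed
  then show False using J(2) by blast
qed

lemma local_ring_if_nilpotent_or_invertible:
  assumes "\<And>x::'b::ring_1. nilpotent x \<or> invertible x"
  shows "local_ring TYPE('b)"
proof -
  let ?N = "{x::'b. \<not> invertible x}"
  have sub: "J \<subseteq> ?N" if "left_ideal J" "J \<noteq> UNIV" for J
    using proper_left_ideal_not_left_invertible[OF that] unfolding invertible_def by blast
  have "1 \<notin> ?N" by (simp add: invertible_def)
  then have "maximal_left_ideal ?N"
    using left_ideal_nonunits[OF assms] sub unfolding maximal_left_ideal_def by blast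
  moreover have "M = ?N" if "maximal_left_ideal M" for M
    using that sub[of M] \<open>maximal_left_ideal ?N\<close> unfolding maximal_left_ideal_def by blast
  ultimately show ?thesis unfolding local_ring_def by blast
qed

lemma maximal_left_ideal_superset:
  assumes "left_ideal (I::'b::ring_1 set)" "1 \<notin> I"
  obtains M where "maximal_left_ideal M" "I \<subseteq> M"
proof -
  define A where "A = {J. left_ideal J \<and> I \<subseteq> J \<and> (1::'b) \<notin> J}"
  have "\<exists>U\<in>A. \<forall>X\<in>C. X \<subseteq> U" if C: "C \<in> chains A" for C
  proof (cases "C = {}")
    case True then show ?thesis using assms by (auto simp: A_def)
  next
    case False
    have CA: "C \<subseteq> A" using chainsD2[OF C] .
    have "left_ideal (\<Union>C)"
      unfolding left_ideal_def
    proof (intro conjI ballI allI)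
      show "0 \<in> \<Union>C" using False CA by (auto simp: A_def left_ideal_def)
    next
      fix x y assume "x \<in> \<Union>C" "y \<in> \<Union>C"
      then obtain X Y where XY: "X \<in> C" "Y \<in> C" "x \<in> X" "y \<in> Y" by auto
      then have "X \<subseteq> Y \<or> Y \<subseteq> X" using chainsD[OF C] by blast
      moreover have "left_ideal X" "left_ideal Y" using XY CA by (auto simp: A_def)
      ultimately show "x + y \<in> \<Union>C" using XY unfolding left_ideal_def by blast
    next
      fix b x assume "x \<in> \<Union>C"
      then obtain X where "X \<in> C" "x \<in> X" by auto
      moreover have "left_ideal X" using \<open>X \<in> C\<close> CA by (auto simp: A_def)
      ultimately show "b * x \<in> \<Union>C" unfolding left_ideal_def by blast
    qed
    moreover have "I \<subseteq> \<Union>C" using False CA by (auto simp: A_def)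
    moreover have "1 \<notin> \<Union>C" using CA by (auto simp: A_def)
    ultimately show ?thesis by (auto simp: A_def)
  qed
  then obtain M where M: "M \<in> A" "\<forall>X\<in>A. M \<subseteq> X \<longrightarrow> X = M"
    using Zorn_Lemma2[of A] by blast
  have "1 \<notin> J" if "left_ideal J" "J \<noteq> UNIV" for J :: "'b set"
    using proper_left_ideal_not_left_invertible[OF that, of 1 1] by auto
  with M have "maximal_left_ideal M" unfolding maximal_left_ideal_def by (auto simp: A_def)
  with M show ?thesis using that by (auto simp: A_def)
qed

lemma left_ideal_principal: "left_ideal {b * (g::'b::ring_1) | b. True}"
  unfolding left_ideal_def
  by (auto simp: distrib_right[symmetric] mult.assoc[symmetric] intro: exI[of _ 0])

lemma local_ring_idempotent_trivial:
  assumes "local_ring TYPE('b::ring_1)" and "(e::'b) * e = e"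
  shows "e = 0 \<or> e = 1"
proof (rule ccontr)
  assume ne: "\<not> (e = 0 \<or> e = 1)"
  define f where "f = 1 - e"
  have ef: "e * f = 0" "f * e = 0" using assms(2) by (simp_all add: f_def algebra_simps)
  have "1 \<notin> {b * e | b. True}"
  proof
    assume "1 \<in> {b * e | b. True}"
    then obtain b where "1 = b * e" by auto
    then have "f = b * e * f" by simp
    with ef ne show False by (simp add: mult.assoc f_def)
  qed
  then obtain M1 where M1: "maximal_left_ideal M1" "{b * e | b. True} \<subseteq> M1"
    using maximal_left_ideal_superset left_ideal_principal by blast
  have "1 \<notin> {b * f | b. True}"
  proof
    assume "1 \<in> {b * f | b. True}"
    then obtain b where "1 = b * f" by auto
    then have "e = b * f * e" by simp
    with ef ne show False by (simp add: mult.assoc)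
  qed
  then obtain M2 where M2: "maximal_left_ideal M2" "{b * f | b. True} \<subseteq> M2"
    using maximal_left_ideal_superset left_ideal_principal by blast
  have "M1 = M2" using assms(1) M1 M2 unfolding local_ring_def by blast
  then have "e \<in> M1" "f \<in> M1" using M1 M2 by (auto intro: exI[of _ 1])
  then have "e + f \<in> M1" using M1 by (simp add: maximal_left_ideal_def left_ideal_def)
  then show False
    using proper_left_ideal_not_left_invertible[of M1 "e + f" 1] M1(1)
    by (simp add: f_def maximal_left_ideal_def)
qed

section \<open>Types of Mathieu subspaces\<close>

lemma mathieu_subspace_two_sided_imp:
  assumes "mathieu_subspace TwoSidedM ofK V"
  shows "mathieu_subspace \<theta> ofK V"
proof -
  have two: "\<exists>N. \<forall>m\<ge>N. b * a ^ m * c \<in> V" if "\<forall>m\<ge>1. a ^ m \<in> V" for a b c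
    using assms that unfolding mathieu_subspace_def by simp
  have "\<exists>N. \<forall>m\<ge>N. b * a ^ m \<in> V" "\<exists>N. \<forall>m\<ge>N. a ^ m * b \<in> V"
    if "\<forall>m\<ge>1. a ^ m \<in> V" for a b
    using two[OF that, of b 1] two[OF that, of 1 b] by simp_all
  with assms show ?thesis unfolding mathieu_subspace_def by (cases \<theta>) auto
qed

lemma mathieu_subspace_imp_left:
  assumes "mathieu_subspace \<theta> ofK V" "\<theta> \<noteq> RightM"
  shows "mathieu_subspace LeftM ofK V"
proof -
  have "\<exists>N. \<forall>m\<ge>N. b * a ^ m \<in> V"
    if "\<theta> = TwoSidedM" "\<forall>m\<ge>1. a ^ m \<in> V" for a b
  proof -
    from assms(1) that have "\<forall>b c. \<exists>N. \<forall>m\<ge>N. b * a ^ m * c \<in> V"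
      unfolding mathieu_subspace_def by simp
    then obtain N where "\<forall>m\<ge>N. b * a ^ m * 1 \<in> V" by blast
    then show ?thesis by auto
  qed
  with assms show ?thesis unfolding mathieu_subspace_def by (cases \<theta>) auto
qed

lemma quasi_stable_two_sided_imp:
  assumes "quasi_stable TwoSidedM ofK"
  shows "quasi_stable \<theta> ofK"
  using assms unfolding quasi_stable_def by (auto intro: mathieu_subspace_two_sided_imp)

lemma quasi_stable_left_or_right:
  assumes "quasi_stable \<theta> ofK"
  shows "quasi_stable LeftM ofK \<or> quasi_stable RightM ofK"
proof (cases "\<theta> = RightM")
  case True
  with assms show ?thesis by simp
next
  case False
  with assms show ?thesis unfolding quasi_stable_def by (auto intro: mathieu_subspace_imp_left)
qed

lemma quasi_stable_left_absorbs:
  assumes "quasi_stable LeftM ofK" "K_subspace ofK V" "1 \<notin> V" "\<forall>m\<ge>1. a ^ m \<in> V"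
  shows "\<exists>m\<ge>1. b * a ^ m \<in> V"
proof -
  obtain N where "\<forall>m\<ge>N. b * a ^ m \<in> V"
    using assms unfolding quasi_stable_def mathieu_subspace_def by fastforce
  then show ?thesis by (intro exI[of _ "max N 1"]) auto
qed

lemma quasi_stable_right_absorbs:
  assumes "quasi_stable RightM ofK" "K_subspace ofK V" "1 \<notin> V" "\<forall>m\<ge>1. a ^ m \<in> V"
  shows "\<exists>m\<ge>1. a ^ m * b \<in> V"
proof -
  obtain N where "\<forall>m\<ge>N. a ^ m * b \<in> V"
    using assms unfolding quasi_stable_def mathieu_subspace_def by fastforce
  then show ?thesis by (intro exI[of _ "max N 1"]) auto
qed

section \<open>Algebras isomorphic to \<open>K \<times> K\<close>\<close>

lemma iso_KxK_if_bij_hom: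
  fixes R :: "'a::field \<times> 'a \<Rightarrow> 'b::ring_1"
  assumes "bij R"
    and add: "\<And>u v. R u + R v = R (fst u + fst v, snd u + snd v)"
    and mult: "\<And>u v. R u * R v = R (fst u * fst v, snd u * snd v)"
    and scale: "\<And>c u. ofK c * R u = R (c * fst u, c * snd u)"
    and one: "R (1, 1) = 1"
  shows "iso_KxK ofK"
proof -
  let ?g = "inv R"
  have gR: "?g (R u) = u" for u using assms(1) by (simp add: bij_is_inj)
  have Rg: "R (?g x) = x" for x using assms(1) by (simp add: bij_is_surj surj_f_inv_f)
  have "bij ?g" using assms(1) by (rule bij_imp_bij_inv)
  moreover have "?g (x + y) = (fst (?g x) + fst (?g y), snd (?g x) + snd (?g y))" for x y
    by (metis add Rg gR)
  moreover have "?g (x * y) = (fst (?g x) * fst (?g y), snd (?g x) * snd (?g y))" for x y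
    by (metis mult Rg gR)
  moreover have "?g (ofK c * x) = (c * fst (?g x), c * snd (?g x))" for c x
    by (metis scale Rg gR)
  moreover have "?g 1 = (1, 1)" by (metis one gR)
  ultimately show ?thesis unfolding iso_KxK_def by blast
qed

lemma iso_KxK_power_cases:
  fixes ofK :: "'a::field \<Rightarrow> 'b::ring_1"
  assumes "iso_KxK ofK"
  shows "(\<exists>c d. ofK c * a + ofK d * a ^ 2 = 1) \<or>
         (\<forall>m\<ge>1. \<forall>b c. \<exists>k. b * a ^ m * c = ofK k * a ^ m)"
proof -
  obtain g :: "'b \<Rightarrow> 'a \<times> 'a" where "bij g"
    and add: "\<And>x y. g (x + y) = (fst (g x) + fst (g y), snd (g x) + snd (g y))"
    and mult: "\<And>x y. g (x * y) = (fst (g x) * fst (g y), snd (g x) * snd (g y))"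
    and scale: "\<And>c x. g (ofK c * x) = (c * fst (g x), c * snd (g x))"
    and one: "g 1 = (1, 1)"
    using assms unfolding iso_KxK_def by blast
  have g_inj: "g x = g y \<Longrightarrow> x = y" for x y using \<open>bij g\<close> by (meson bij_def injD)
  have power: "g (x ^ m) = (fst (g x) ^ m, snd (g x) ^ m)" for x m
    by (induction m) (simp_all add: one mult)
  define \<alpha> \<beta> where "\<alpha> = fst (g a)" and "\<beta> = snd (g a)"
  show ?thesis
  proof (cases "\<alpha> \<noteq> 0 \<and> \<beta> \<noteq> 0")
    case True
    \<comment> \<open>the polynomial \<open>c X + d X\<^sup>2\<close> interpolating the value \<open>1\<close> at \<open>\<alpha>\<close> and \<open>\<beta>\<close>\<close>
    define c d where "c = inverse \<alpha> + inverse \<beta>" and "d = - inverse (\<alpha> * \<beta>)"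
    have "c * \<alpha> + d * \<alpha> ^ 2 = 1" "c * \<beta> + d * \<beta> ^ 2 = 1"
      using True unfolding c_def d_def by (simp_all add: field_simps power2_eq_square)
    then have "g (ofK c * a + ofK d * a ^ 2) = g 1"
      by (simp add: add scale power one flip: \<alpha>_def \<beta>_def)
    then show ?thesis using g_inj by blast
  next
    case False
    have "\<exists>k. b * a ^ m * c = ofK k * a ^ m" if "m \<ge> 1" for m b c
    proof -
      have lhs: "g (b * a ^ m * c) = (fst (g b) * \<alpha> ^ m * fst (g c), snd (g b) * \<beta> ^ m * snd (g c))"
        unfolding \<alpha>_def \<beta>_def by (simp only: mult power fst_conv snd_conv)
      have rhs: "g (ofK k * a ^ m) = (k * \<alpha> ^ m, k * \<beta> ^ m)" for k
        unfolding \<alpha>_def \<beta>_def by (simp only: scale power fst_conv snd_conv)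
      have "g (b * a ^ m * c) = g (ofK k * a ^ m)"
        if "k = (if \<alpha> = 0 then snd (g b) * snd (g c) else fst (g b) * fst (g c))" for k
        using False \<open>m \<ge> 1\<close> that unfolding lhs rhs by (auto simp: mult_ac)
      then show ?thesis using g_inj by blast
    qed
    then show ?thesis by blast
  qed
qed

lemma iso_KxK_imp_quasi_stable:
  assumes "iso_KxK ofK"
  shows "quasi_stable TwoSidedM ofK"
  unfolding quasi_stable_def mathieu_subspace_def mtype.case
proof (intro allI impI conjI)
  show "K_subspace ofK V" if "K_subspace ofK V \<and> 1 \<notin> V" for V
    using that by blast
next
  fix V a b c
  assume V: "K_subspace ofK V \<and> 1 \<notin> V" and powers: "\<forall>m\<ge>1. a ^ m \<in> V"
  have "ofK c * a + ofK d * a ^ 2 \<in> V" for c d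
    using V powers[rule_format, of 1] powers[rule_format, of 2] unfolding K_subspace_def by simp
  then have "ofK c * a + ofK d * a ^ 2 \<noteq> 1" for c d
    using V by metis
  then have scalar: "\<forall>m\<ge>1. \<forall>b c. \<exists>k. b * a ^ m * c = ofK k * a ^ m"
    using iso_KxK_power_cases[OF assms, of a] by blast
  have "b * a ^ m * c \<in> V" if m: "m \<ge> 1" for m
  proof -
    obtain k where "b * a ^ m * c = ofK k * a ^ m" using scalar m by blast
    then show ?thesis using V powers m unfolding K_subspace_def by simp
  qed
  then show "\<exists>N. \<forall>m\<ge>N. b * a ^ m * c \<in> V" by blast
qed

section \<open>Polynomial evaluation in a \<open>K\<close>-algebra\<close>

locale K_alg =
  fixes ofK :: "'a::field \<Rightarrow> 'b::ring_1"
  assumes K_algebra: "K_algebra ofK"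
begin

lemma ofK_add: "ofK (c + d) = ofK c + ofK d"
  using K_algebra unfolding K_algebra_def by blast

lemma ofK_mult: "ofK (c * d) = ofK c * ofK d"
  using K_algebra unfolding K_algebra_def by blast

lemma ofK_1 [simp]: "ofK 1 = 1"
  using K_algebra unfolding K_algebra_def by blast

lemma ofK_commute: "ofK c * x = x * ofK c"
  using K_algebra unfolding K_algebra_def by blast

lemma ofK_0 [simp]: "ofK 0 = 0"
  using ofK_add[of 0 0] by simp

lemma ofK_minus: "ofK (- c) = - ofK c"
  using ofK_add[of c "- c"] by (simp add: eq_neg_iff_add_eq_0 add.commute)

lemma ofK_diff: "ofK (c - d) = ofK c - ofK d"
  using ofK_add[of c "- d"] ofK_minus[of d] by simp

lemma ofK_left_commute: "ofK c * (x * y) = x * (ofK c * y)"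
  by (metis ofK_commute mult.assoc)

lemma ofK_mult_right_cancel:
  assumes "ofK c * y = ofK d * y" "y \<noteq> 0"
  shows "c = d"
proof (rule ccontr)
  assume "c \<noteq> d"
  have "y = ofK (inverse (c - d) * (c - d)) * y" using \<open>c \<noteq> d\<close> by simp
  also have "\<dots> = ofK (inverse (c - d)) * ((ofK c - ofK d) * y)"
    by (simp add: ofK_mult ofK_diff mult.assoc)
  also have "\<dots> = 0" using assms(1) by (simp add: left_diff_distrib)
  finally show False using assms(2) by simp
qed

lemma peval_eq_sum_atMost:
  assumes "degree p \<le> n"
  shows "peval ofK p x = (\<Sum>i\<le>n. ofK (coeff p i) * x ^ i)"
  unfolding peval_def
  by (rule sum.mono_neutral_left) (use assms in \<open>auto simp: coeff_eq_0 not_le intro: ccontr\<close>)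

lemma peval_add: "peval ofK (p + q) x = peval ofK p x + peval ofK q x"
proof -
  let ?n = "max (degree p) (degree q)"
  have "peval ofK (p + q) x = (\<Sum>i\<le>?n. ofK (coeff (p + q) i) * x ^ i)"
    by (rule peval_eq_sum_atMost) (simp add: degree_add_le)
  also have "\<dots> = (\<Sum>i\<le>?n. ofK (coeff p i) * x ^ i) + (\<Sum>i\<le>?n. ofK (coeff q i) * x ^ i)"
    by (simp add: ofK_add distrib_right sum.distrib)
  also have "\<dots> = peval ofK p x + peval ofK q x"
    using peval_eq_sum_atMost[of p ?n x] peval_eq_sum_atMost[of q ?n x] by simp
  finally show ?thesis .
qed

lemma peval_smult: "peval ofK (smult c p) x = ofK c * peval ofK p x"
proof -
  have "peval ofK (smult c p) x = (\<Sum>i\<le>degree p. ofK (coeff (smult c p) i) * x ^ i)"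
    by (rule peval_eq_sum_atMost) (simp add: degree_smult_le)
  also have "\<dots> = ofK c * peval ofK p x"
    by (simp add: peval_def ofK_mult mult.assoc sum_distrib_left)
  finally show ?thesis .
qed

lemma peval_pCons: "peval ofK (pCons a p) x = ofK a + x * peval ofK p x"
proof -
  have "peval ofK (pCons a p) x = (\<Sum>i\<le>Suc (degree p). ofK (coeff (pCons a p) i) * x ^ i)"
    by (rule peval_eq_sum_atMost) (simp add: degree_pCons_le)
  also have "\<dots> = ofK a + (\<Sum>i\<le>degree p. ofK (coeff p i) * (x * x ^ i))"
    by (simp add: sum.atMost_Suc_shift del: sum.atMost_Suc)
  also have "\<dots> = ofK a + x * peval ofK p x"
    by (simp add: peval_def sum_distrib_left ofK_left_commute)
  finally show ?thesis .
qed

lemma peval_0 [simp]: "peval ofK 0 x = 0"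
  by (simp add: peval_def)

lemma peval_1 [simp]: "peval ofK 1 x = 1"
  by (simp add: peval_def)

lemma peval_X [simp]: "peval ofK [:0, 1:] x = x"
  by (simp add: peval_pCons)

lemma peval_mult: "peval ofK (p * q) x = peval ofK p x * peval ofK q x"
proof (induction p)
  case (pCons a p)
  have "peval ofK (pCons a p * q) x = ofK a * peval ofK q x + x * (peval ofK p x * peval ofK q x)"
    by (simp add: peval_add peval_smult peval_pCons pCons.IH)
  also have "\<dots> = peval ofK (pCons a p) x * peval ofK q x"
    by (simp add: peval_pCons distrib_right mult.assoc)
  finally show ?case .
qed simp

lemma peval_diff: "peval ofK (p - q) x = peval ofK p x - peval ofK q x"
  using peval_add[of "p - q" q x] by (simp add: algebra_simps)

lemma peval_power: "peval ofK (p ^ k) x = peval ofK p x ^ k"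
  by (induction k) (simp_all add: peval_mult)

lemma peval_monom: "peval ofK (monom c k) x = ofK c * x ^ k"
  by (simp add: monom_altdef peval_smult peval_power)

lemma peval_commute: "peval ofK p x * peval ofK q x = peval ofK q x * peval ofK p x"
  by (metis peval_mult mult.commute)

lemma K_subspace_sum:
  assumes "K_subspace ofK V" "finite S" "\<And>i. i \<in> S \<Longrightarrow> h i \<in> V"
  shows "sum h S \<in> V"
  using assms(2,3) by (induction S rule: finite_induct) (use assms(1) in \<open>simp_all add: K_subspace_def\<close>)

lemma peval_in_K_subspace:
  assumes V: "K_subspace ofK V" and "\<forall>m\<ge>1. a ^ m \<in> V" and "coeff p 0 = 0"
  shows "peval ofK p a \<in> V"
  unfolding peval_def
proof (rule K_subspace_sum[OF V])
  fix i
  show "ofK (coeff p i) * a ^ i \<in> V"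
    using assms by (cases "i = 0") (simp_all add: K_subspace_def)
qed simp

section \<open>Algebraic elements\<close>

lemma invertible_if_poly_eq_1:
  assumes "coeff p 0 = 0" "peval ofK p x = 1"
  shows "invertible x"
proof -
  obtain r where "p = pCons 0 r" using assms(1) by (cases p) simp
  with assms have "x * peval ofK r x = 1" by (simp add: peval_pCons)
  moreover have "peval ofK r x * x = x * peval ofK r x"
    using peval_commute[of r x "[:0, 1:]"] by simp
  ultimately show ?thesis unfolding invertible_def by auto
qed

lemma annihilating_poly_normal_form:
  assumes "p \<noteq> 0" "peval ofK p x = 0"
  obtains k s where "k \<ge> 1" "x ^ k * (1 - x * peval ofK s x) = 0"
proof -
  \<comment> \<open>the factor \<open>X\<close> makes \<open>0\<close> a root, so that \<open>k \<ge> 1\<close>\<close>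
  define P where "P = [:0, 1:] * p"
  have "P \<noteq> 0" using assms by (simp add: P_def)
  define k where "k = order 0 P"
  have "k \<ge> 1" using order_root[of P 0] \<open>P \<noteq> 0\<close> by (simp add: P_def k_def)
  obtain q where Pq: "P = [:0, 1:] ^ k * q" and "\<not> [:0, 1:] dvd q"
    using order_decomp[OF \<open>P \<noteq> 0\<close>, of 0] by (auto simp: k_def)
  then obtain c r where q: "q = pCons c r" and "c \<noteq> 0"
    using poly_eq_0_iff_dvd[of q 0] by (cases q) (auto simp: poly_0_coeff_0)
  define z where "z = peval ofK r x"
  have "peval ofK P x = 0" using assms(2) by (simp add: P_def peval_pCons)
  moreover have "peval ofK P x = x ^ k * peval ofK q x"
    unfolding Pq by (simp only: peval_mult peval_power peval_X)
  ultimately have "x ^ k * (ofK c + x * z) = 0"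
    by (simp add: q z_def peval_pCons)
  define s where "s = smult (- inverse c) r"
  have "peval ofK s x = - (ofK (inverse c) * z)"
    unfolding s_def z_def peval_smult ofK_minus by simp
  moreover have "ofK (inverse c) * ofK c = 1"
    using \<open>c \<noteq> 0\<close> by (simp flip: ofK_mult)
  ultimately have "1 - x * peval ofK s x = ofK (inverse c) * (ofK c + x * z)"
    by (simp add: distrib_left ofK_left_commute)
  then have "x ^ k * (1 - x * peval ofK s x) = ofK (inverse c) * (x ^ k * (ofK c + x * z))"
    by (simp add: ofK_left_commute)
  with \<open>x ^ k * (ofK c + x * z) = 0\<close> \<open>k \<ge> 1\<close> show ?thesis using that by simp
qed

lemma algebraic_element_cases:
  assumes "p \<noteq> 0" "peval ofK p x = 0"
  shows "nilpotent x \<or> (\<exists>e::'b. e * e = e \<and> e \<noteq> 0 \<and> e \<noteq> 1) \<or>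
         (\<exists>q. coeff q 0 = 0 \<and> peval ofK q x = 1)"
proof -
  obtain k s where "k \<ge> 1" and xk: "x ^ k * (1 - x * peval ofK s x) = 0"
    using annihilating_poly_normal_form[OF assms] .
  define y where "y = [:0, 1:] * s"
  have y_eval: "peval ofK y x = x * peval ofK s x" by (simp add: y_def peval_pCons)
  \<comment> \<open>\<open>e = y(x)\<^sup>k\<close> is divisible by \<open>x\<^sup>k\<close>, hence fixed by right multiplication with \<open>y(x)\<close>\<close>
  define e where "e = peval ofK (y ^ k) x"
  have "y ^ k = s ^ k * [:0, 1:] ^ k" unfolding y_def power_mult_distrib by (rule mult.commute)
  then have "e = peval ofK (s ^ k) x * x ^ k" by (simp add: e_def peval_mult peval_power)
  then have "e * (1 - peval ofK y x) = 0" using xk by (simp add: y_eval mult.assoc)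
  then have "e * peval ofK y x = e" by (simp add: algebra_simps)
  then have "e * peval ofK y x ^ j = e" for j
    by (induction j) (simp_all add: power_Suc2 mult.assoc[symmetric])
  then have "e * e = e" by (simp add: e_def peval_power)
  consider "e = 0" | "e = 1" | "e \<noteq> 0 \<and> e \<noteq> 1" by blast
  then show ?thesis
  proof cases
    case 1
    then have "nilpotent (peval ofK y x)" by (auto simp: e_def peval_power nilpotent_def)
    then obtain G where "(1 - x * peval ofK s x) * G = 1"
      using invertible_one_minus_nilpotent unfolding invertible_def y_eval by blast
    then have "x ^ k = 0" by (metis xk mult.assoc mult_1_right mult_zero_left)
    then show ?thesis unfolding nilpotent_def by blast
  next
    case 2
    have "coeff (y ^ k) 0 = 0"
      using \<open>k \<ge> 1\<close> by (simp add: poly_0_coeff_0[symmetric] y_def)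
    then show ?thesis using 2 unfolding e_def by blast
  next
    case 3
    then show ?thesis using \<open>e * e = e\<close> by blast
  qed
qed

lemma nilpotent_or_invertible_if_algebraic:
  fixes x :: 'b
  assumes "algebraic_over ofK" and "\<nexists>e::'b. e * e = e \<and> e \<noteq> 0 \<and> e \<noteq> 1"
  shows "nilpotent x \<or> invertible x"
proof -
  obtain p where "p \<noteq> 0" "peval ofK p x = 0"
    using assms(1) unfolding algebraic_over_def by blast
  then show ?thesis using algebraic_element_cases assms(2) invertible_if_poly_eq_1 by blast
qed

section \<open>Quasi-stable algebras\<close>

lemma even_power_span_of_transcendental:
  assumes "\<nexists>p. p \<noteq> 0 \<and> peval ofK p x = 0"
  obtains V where "K_subspace ofK V" "1 \<notin> V" "\<And>m. m \<ge> 1 \<Longrightarrow> (x ^ 2) ^ m \<in> V"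
    "\<And>m. x ^ Suc (2 * m) \<notin> V"
proof
  have peval_inj: "p = q" if "peval ofK p x = peval ofK q x" for p q
    using assms that by (metis peval_diff right_minus_eq)
  define P :: "'a poly set" where "P = {p. \<forall>i. i = 0 \<or> odd i \<longrightarrow> coeff p i = 0}"
  let ?V = "(\<lambda>p. peval ofK p x) ` P"
  show "K_subspace ofK ?V"
    unfolding K_subspace_def
  proof (intro conjI ballI allI)
    show "0 \<in> ?V" by (rule image_eqI[of _ _ 0]) (simp_all add: P_def)
  next
    fix u v assume "u \<in> ?V" "v \<in> ?V"
    then obtain p q where "p \<in> P" "q \<in> P" "u = peval ofK p x" "v = peval ofK q x" by blast
    then show "u + v \<in> ?V" by (intro image_eqI[of _ _ "p + q"]) (simp_all add: P_def peval_add)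
  next
    fix c u assume "u \<in> ?V"
    then obtain p where "p \<in> P" "u = peval ofK p x" by blast
    then show "ofK c * u \<in> ?V"
      by (intro image_eqI[of _ _ "smult c p"]) (simp_all add: P_def peval_smult)
  qed
  show "1 \<notin> ?V" unfolding P_def using peval_inj[of _ 1] by force
  show "(x ^ 2) ^ m \<in> ?V" if "m \<ge> 1" for m
    unfolding P_def using that
    by (intro image_eqI[of _ _ "monom 1 (2 * m)"]) (auto simp: peval_monom power_mult)
  show "x ^ Suc (2 * m) \<notin> ?V" for m
  proof
    assume "x ^ Suc (2 * m) \<in> ?V"
    then obtain p where "p \<in> P" "peval ofK (monom 1 (Suc (2 * m))) x = peval ofK p x"
      by (auto simp: peval_monom)
    then have "coeff p (Suc (2 * m)) = 0" "p = monom 1 (Suc (2 * m))"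
      using peval_inj unfolding P_def by auto
    then show False by simp
  qed
qed

lemma quasi_stable_imp_algebraic:
  assumes "quasi_stable LeftM ofK \<or> quasi_stable RightM ofK"
  shows "algebraic_over ofK"
  unfolding algebraic_over_def
proof (rule allI, rule ccontr)
  fix x
  assume "\<nexists>p. p \<noteq> 0 \<and> peval ofK p x = 0"
  then obtain V where "K_subspace ofK V" "1 \<notin> V" "\<forall>m\<ge>1. (x ^ 2) ^ m \<in> V"
    and "\<And>m. x ^ Suc (2 * m) \<notin> V"
    by (rule even_power_span_of_transcendental) blast
  moreover have "x * (x ^ 2) ^ m = x ^ Suc (2 * m)" "(x ^ 2) ^ m * x = x ^ Suc (2 * m)" for m
    by (simp_all add: power_mult[symmetric] power_commutes)
  ultimately show False
    using assms quasi_stable_left_absorbs[of ofK V "x ^ 2" x]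
      quasi_stable_right_absorbs[of ofK V "x ^ 2" x] by auto
qed

lemma K_subspace_line: "K_subspace ofK (range (\<lambda>c. ofK c * g))"
  unfolding K_subspace_def
proof (intro conjI ballI allI)
  show "0 \<in> range (\<lambda>c. ofK c * g)" by (rule range_eqI[of _ _ 0]) simp
next
  fix x y assume "x \<in> range (\<lambda>c. ofK c * g)" "y \<in> range (\<lambda>c. ofK c * g)"
  then obtain c d where "x = ofK c * g" "y = ofK d * g" by blast
  then show "x + y \<in> range (\<lambda>c. ofK c * g)"
    by (intro range_eqI[of _ _ "c + d"]) (simp add: ofK_add distrib_right)
next
  fix c x assume "x \<in> range (\<lambda>c. ofK c * g)"
  then obtain d where "x = ofK d * g" by blast
  then show "ofK c * x \<in> range (\<lambda>c. ofK c * g)"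
    by (intro range_eqI[of _ _ "c * d"]) (simp add: ofK_mult mult.assoc)
qed

lemma one_notin_idempotent_line:
  assumes "g * g = g" "g \<noteq> 1"
  shows "1 \<notin> range (\<lambda>c. ofK c * g)"
proof
  assume "1 \<in> range (\<lambda>c. ofK c * g)"
  then obtain c where "1 = ofK c * g" by auto
  then have "1 - g = ofK c * g * (1 - g)" by simp
  also have "\<dots> = 0" using assms(1) by (simp add: algebra_simps)
  finally show False using assms(2) by simp
qed

lemma quasi_stable_left_idempotent:
  assumes "quasi_stable LeftM ofK" "g * g = g" "g \<noteq> 1"
  obtains c where "x * g = ofK c * g"
proof -
  have "\<forall>m\<ge>1. g ^ m \<in> range (\<lambda>c. ofK c * g)"
    using idempotent_power[OF assms(2)] by (auto intro: range_eqI[of _ _ 1])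
  then obtain m where "m \<ge> 1" "x * g ^ m \<in> range (\<lambda>c. ofK c * g)"
    using quasi_stable_left_absorbs[OF assms(1) K_subspace_line one_notin_idempotent_line[OF assms(2,3)]]
    by blast
  then show ?thesis using that idempotent_power[OF assms(2)] by auto
qed

lemma quasi_stable_right_idempotent:
  assumes "quasi_stable RightM ofK" "g * g = g" "g \<noteq> 1"
  obtains c where "g * x = ofK c * g"
proof -
  have "\<forall>m\<ge>1. g ^ m \<in> range (\<lambda>c. ofK c * g)"
    using idempotent_power[OF assms(2)] by (auto intro: range_eqI[of _ _ 1])
  then obtain m where "m \<ge> 1" "g ^ m * x \<in> range (\<lambda>c. ofK c * g)"
    using quasi_stable_right_absorbs[OF assms(1) K_subspace_line one_notin_idempotent_line[OF assms(2,3)]]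
    by blast
  then show ?thesis using that idempotent_power[OF assms(2)] by auto
qed

lemma idempotent_decomposition_if_quasi_stable:
  assumes "quasi_stable LeftM ofK \<or> quasi_stable RightM ofK"
    and "e * e = e" "e \<noteq> 0" "e \<noteq> 1"
  shows "\<exists>c d. x = ofK c * e + ofK d * (1 - e)"
proof -
  have f: "(1 - e) * (1 - e) = 1 - e" "1 - e \<noteq> 1" using assms(2,3) by (simp_all add: algebra_simps)
  from assms(1) show ?thesis
  proof
    assume left: "quasi_stable LeftM ofK"
    obtain c d where "x * e = ofK c * e" "x * (1 - e) = ofK d * (1 - e)"
      using quasi_stable_left_idempotent[OF left assms(2,4)] quasi_stable_left_idempotent[OF left f]
      by metis
    moreover have "x = x * e + x * (1 - e)" by (simp add: algebra_simps)
    ultimately show ?thesis by metis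
  next
    assume right: "quasi_stable RightM ofK"
    obtain c d where "e * x = ofK c * e" "(1 - e) * x = ofK d * (1 - e)"
      using quasi_stable_right_idempotent[OF right assms(2,4)] quasi_stable_right_idempotent[OF right f]
      by metis
    moreover have "x = e * x + (1 - e) * x" by (simp add: algebra_simps)
    ultimately show ?thesis by metis
  qed
qed

lemma iso_KxK_if_idempotent_decomposition:
  assumes e: "e * e = e" "e \<noteq> 0" "e \<noteq> 1"
    and decomp: "\<And>x. \<exists>c d. x = ofK c * e + ofK d * (1 - e)"
  shows "iso_KxK ofK"
proof -
  define f where "f = 1 - e"
  have ef: "e * f = 0" "f * e = 0" "f * f = f" "f \<noteq> 0"
    using e by (simp_all add: f_def algebra_simps)
  define R where "R u = ofK (fst u) * e + ofK (snd u) * f" for u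
  have Re: "R u * e = ofK (fst u) * e" and Rf: "R u * f = ofK (snd u) * f" for u
    by (simp_all add: R_def distrib_right mult.assoc e ef)
  have "inj R"
  proof (rule injI)
    fix u v assume "R u = R v"
    then have "ofK (fst u) * e = ofK (fst v) * e" "ofK (snd u) * f = ofK (snd v) * f"
      by (metis Re, metis Rf)
    then show "u = v" using ofK_mult_right_cancel e(2) ef(4) by (simp add: prod_eq_iff)
  qed
  moreover have "surj R"
    unfolding surj_def
  proof
    fix x
    obtain c d where "x = ofK c * e + ofK d * (1 - e)" using decomp by blast
    then show "\<exists>u. x = R u" by (intro exI[of _ "(c, d)"]) (simp add: R_def f_def)
  qed
  ultimately have "bij R" by (rule bijI)
  have "ofK c * y * (ofK d * z) = ofK (c * d) * (y * z)" for c d y z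
    by (simp only: mult.assoc ofK_mult ofK_left_commute[of d y z, symmetric])
  then have "R u * R v = R (fst u * fst v, snd u * snd v)" for u v
    by (simp add: R_def distrib_left distrib_right e ef)
  moreover have "R u + R v = R (fst u + fst v, snd u + snd v)" for u v
    by (simp add: R_def ofK_add distrib_right add_ac)
  moreover have "ofK c * R u = R (c * fst u, c * snd u)" for c u
    by (simp add: R_def distrib_left ofK_mult mult.assoc)
  moreover have "R (1, 1) = 1" by (simp add: R_def f_def)
  ultimately show ?thesis using \<open>bij R\<close> by (intro iso_KxK_if_bij_hom[of R])
qed

lemma local_algebraic_imp_quasi_stable:
  assumes "local_ring TYPE('b)" "algebraic_over ofK"
  shows "quasi_stable TwoSidedM ofK"
  unfolding quasi_stable_def mathieu_subspace_def mtype.case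
proof (intro allI impI conjI)
  show "K_subspace ofK V" if "K_subspace ofK V \<and> 1 \<notin> V" for V
    using that by blast
next
  fix V a b c
  assume V: "K_subspace ofK V \<and> 1 \<notin> V" and powers: "\<forall>m\<ge>1. a ^ m \<in> V"
  obtain p where "p \<noteq> 0" "peval ofK p a = 0" using assms(2) unfolding algebraic_over_def by blast
  moreover have "\<nexists>q. coeff q 0 = 0 \<and> peval ofK q a = 1"
    using peval_in_K_subspace[of V a] V powers by metis
  ultimately obtain k where "a ^ k = 0"
    using algebraic_element_cases local_ring_idempotent_trivial[OF assms(1)]
    unfolding nilpotent_def by blast
  then have "a ^ m = 0" if "m \<ge> k" for m
    using that by (metis le_add_diff_inverse mult_zero_left power_add)
  then have "b * a ^ m * c \<in> V" if "m \<ge> k" for m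
    using that V by (simp add: K_subspace_def)
  then show "\<exists>N. \<forall>m\<ge>N. b * a ^ m * c \<in> V" by blast
qed

end

theorem theorem7p6:
  fixes ofK :: "'a::field \<Rightarrow> 'b::ring_1" and \<theta> :: mtype
  assumes "K_algebra ofK"
  shows "quasi_stable \<theta> ofK \<longleftrightarrow>
           iso_KxK ofK \<or> (local_ring TYPE('b) \<and> algebraic_over ofK)"
proof -
  interpret K_alg ofK using assms by unfold_locales
  show ?thesis
  proof
    assume "quasi_stable \<theta> ofK"
    then have side: "quasi_stable LeftM ofK \<or> quasi_stable RightM ofK"
      by (rule quasi_stable_left_or_right)
    then have alg: "algebraic_over ofK" by (rule quasi_stable_imp_algebraic)
    show "iso_KxK ofK \<or> (local_ring TYPE('b) \<and> algebraic_over ofK)"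
    proof (cases "\<exists>e::'b. e * e = e \<and> e \<noteq> 0 \<and> e \<noteq> 1")
      case True
      then obtain e :: 'b where "e * e = e" "e \<noteq> 0" "e \<noteq> 1" by blast
      then show ?thesis
        using iso_KxK_if_idempotent_decomposition idempotent_decomposition_if_quasi_stable[OF side]
        by blast
    next
      case False
      then have "local_ring TYPE('b)"
        using local_ring_if_nilpotent_or_invertible nilpotent_or_invertible_if_algebraic[OF alg]
        by blast
      with alg show ?thesis by blast
    qed
  next
    assume "iso_KxK ofK \<or> (local_ring TYPE('b) \<and> algebraic_over ofK)"
    then have "quasi_stable TwoSidedM ofK"
      using iso_KxK_imp_quasi_stable local_algebraic_imp_quasi_stable by blast
    then show "quasi_stable \<theta> ofK" by (rule quasi_stable_two_sided_imp)
  qed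
qed

end
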